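(* Let $\Omega$ be a connected weighted simplicial complex on $[n]$, let $\mathcal V_0,\ldots,\mathcal V_n$ be complex vector spaces and $\mathcal V=\mathcal V_0\otimes\cdots\otimes\mathcal V_n$ (algebraic tensor product). Then every $v\in\mathcal V$ satisfies ${\rm rank}_\Omega(v)<\infty$, i.e. every $v\in\mathcal V$ admits an $\Omega$-decomposition.
   Context: $[n]=\{0,\ldots,n\}$. A weighted simplicial complex (wsc) on $[n]$ is a function $\Omega\colon\mathcal P([n])\to\mathbb N=\{0,1,\ldots\}$ such that $S_1\subseteq S_2$ implies $\Omega(S_1)\mid\Omega(S_2)$; simplices are sets with $\Omega(S)\ne0$, every singleton is assumed to be a simplex, and facets are inclusion-maximal simplices. $\widetilde{\mathcal F}$ is the multiset containing each facet $F$ exactly $\Omega(F)$ times, and for $i\in[n]$, $\widetilde{\mathcal F}_i\subseteq\widetilde{\mathcal F}$ is the sub-multiset of (copies of) facets containing $i$. Vertices $i,j$ are neighbours if some facet contains both; $\Omega$ is connected if any two vertices are joined by a finite chain of successive neighbours. For a finite set $\mathcal I$ and $\alpha\colon\widetilde{\mathcal F}\to\mathcal I$, write $\alpha_{\mid i}$ for the restriction of $\alpha$ to $\widetilde{\mathcal F}_i$. An $\Omega$-decomposition of $v\in\mathcal V$ consists of a finite set $\mathcal I$ and vectors $v^{[i]}_\beta\in\mathcal V_i$ for $i\in[n]$ and $\beta\in\mathcal I^{\widetilde{\mathcal F}_i}$ (functions $\widetilde{\mathcal F}_i\to\mathcal I$) such that $v=\sum_{\alpha\in\mathcal I^{\widetilde{\mathcal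 F}}}v^{[0]}_{\alpha_{\mid 0}}\otimes\cdots\otimes v^{[n]}_{\alpha_{\mid n}}$. ${\rm rank}_\Omega(v)$ is the smallest $|\mathcal I|$ over all $\Omega$-decompositions of $v$, and $\infty$ if none exists. *)

theory Defs
  imports "HOL-Analysis.Analysis"
begin

definition wsc :: "nat \<Rightarrow> (nat set \<Rightarrow> nat) \<Rightarrow> bool" where
  "wsc n \<Omega> \<longleftrightarrow>
     (\<forall>S1 S2. S1 \<subseteq> S2 \<and> S2 \<subseteq> {0..n} \<longrightarrow> \<Omega> S1 dvd \<Omega> S2) \<and>
     (\<forall>i\<in>{0..n}. \<Omega> {i} \<noteq> 0)"

definition wsc_simplex :: "nat \<Rightarrow> (nat set \<Rightarrow> nat) \<Rightarrow> nat set \<Rightarrow> bool" where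
  "wsc_simplex n \<Omega> S \<longleftrightarrow> S \<subseteq> {0..n} \<and> \<Omega> S \<noteq> 0"

definition wsc_facet :: "nat \<Rightarrow> (nat set \<Rightarrow> nat) \<Rightarrow> nat set \<Rightarrow> bool" where
  "wsc_facet n \<Omega> F \<longleftrightarrow> wsc_simplex n \<Omega> F \<and> (\<forall>S. wsc_simplex n \<Omega> S \<and> F \<subseteq> S \<longrightarrow> S = F)"

text \<open>The multiset of facets, each wsc_facet F taken Omega(F) times; the copies of F
  are represented as the pairs (F, k) with k < Omega(F).\<close>
definition facets_mult :: "nat \<Rightarrow> (nat set \<Rightarrow> nat) \<Rightarrow> (nat set \<times> nat) set" where
  "facets_mult n \<Omega> = {(F, k). wsc_facet n \<Omega> F \<and> k < \<Omega> F}"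

definition facets_mult_at :: "nat \<Rightarrow> (nat set \<Rightarrow> nat) \<Rightarrow> nat \<Rightarrow> (nat set \<times> nat) set" where
  "facets_mult_at n \<Omega> i = {Fk \<in> facets_mult n \<Omega>. i \<in> fst Fk}"

definition neighbours :: "nat \<Rightarrow> (nat set \<Rightarrow> nat) \<Rightarrow> nat \<Rightarrow> nat \<Rightarrow> bool" where
  "neighbours n \<Omega> i j \<longleftrightarrow> (\<exists>F. wsc_facet n \<Omega> F \<and> i \<in> F \<and> j \<in> F)"

definition wsc_connected :: "nat \<Rightarrow> (nat set \<Rightarrow> nat) \<Rightarrow> bool" where
  "wsc_connected n \<Omega> \<longleftrightarrow>
     (\<forall>i\<in>{0..n}. \<forall>j\<in>{0..n}. (neighbours n \<Omega>)\<^sup>*\<^sup>* i j)"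

text \<open>The spaces V i are complex subspaces of a common ambient complex vector space
  (scalar multiplication sV).  The tensor product is the whole complex vector space 't
  (scalar multiplication sT) together with the canonical multilinear map tens, given on
  tuples x with x i in V i for i in {0..n} (extensional outside {0..n}).\<close>

definition multilinear_on ::
  "(complex \<Rightarrow> 'v::ab_group_add \<Rightarrow> 'v) \<Rightarrow> (complex \<Rightarrow> 't::ab_group_add \<Rightarrow> 't) \<Rightarrow>
   nat \<Rightarrow> (nat \<Rightarrow> 'v set) \<Rightarrow> ((nat \<Rightarrow> 'v) \<Rightarrow> 't) \<Rightarrow> bool" where
  "multilinear_on sV sT n V tens \<longleftrightarrow>
     (\<forall>x \<in> PiE {0..n} V. \<forall>j\<in>{0..n}. \<forall>u\<in>V j. \<forall>w\<in>V j. \<forall>a b.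
        tens (x(j := sV a u + sV b w)) = sT a (tens (x(j := u))) + sT b (tens (x(j := w))))"

definition is_tensor_product ::
  "(complex \<Rightarrow> 'v::ab_group_add \<Rightarrow> 'v) \<Rightarrow> (complex \<Rightarrow> 't::ab_group_add \<Rightarrow> 't) \<Rightarrow>
   nat \<Rightarrow> (nat \<Rightarrow> 'v set) \<Rightarrow> ((nat \<Rightarrow> 'v) \<Rightarrow> 't) \<Rightarrow> bool" where
  "is_tensor_product sV sT n V tens \<longleftrightarrow>
     vector_space sV \<and> vector_space sT \<and>
     (\<forall>i\<in>{0..n}. module.subspace sV (V i)) \<and>
     multilinear_on sV sT n V tens \<and>
     module.span sT (tens ` PiE {0..n} V) = UNIV \<and>
     (\<forall>B. (\<forall>i\<in>{0..n}. B i \<subseteq> V i \<and> \<not> module.dependent sV (B i)) \<longrightarrow>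
          inj_on tens (PiE {0..n} B) \<and> \<not> module.dependent sT (tens ` PiE {0..n} B))"

text \<open>An Omega-decomposition of v with index set I (a finite set, w.l.o.g. of naturals):
  vectors vb i beta in V i for i in {0..n} and beta : Ftilde_i \<rightarrow> I, such that
  v is the sum over alpha : Ftilde \<rightarrow> I of the elementary tensors of the vb i (alpha|_i).\<close>
definition Omega_decomposition ::
  "(complex \<Rightarrow> 'v::ab_group_add \<Rightarrow> 'v) \<Rightarrow> nat \<Rightarrow> (nat set \<Rightarrow> nat) \<Rightarrow> (nat \<Rightarrow> 'v set) \<Rightarrow>
   ((nat \<Rightarrow> 'v) \<Rightarrow> 't::ab_group_add) \<Rightarrow> 't \<Rightarrow> nat set \<Rightarrow>
   (nat \<Rightarrow> ((nat set \<times> nat) \<Rightarrow> nat) \<Rightarrow> 'v) \<Rightarrow> bool" where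
  "Omega_decomposition sV n \<Omega> V tens v I vb \<longleftrightarrow>
     finite I \<and>
     (\<forall>i\<in>{0..n}. \<forall>\<beta> \<in> PiE (facets_mult_at n \<Omega> i) (\<lambda>_. I). vb i \<beta> \<in> V i) \<and>
     v = (\<Sum>\<alpha> \<in> PiE (facets_mult n \<Omega>) (\<lambda>_. I).
            tens (restrict (\<lambda>i. vb i (restrict \<alpha> (facets_mult_at n \<Omega> i))) {0..n}))"

definition has_Omega_decomposition ::
  "(complex \<Rightarrow> 'v::ab_group_add \<Rightarrow> 'v) \<Rightarrow> nat \<Rightarrow> (nat set \<Rightarrow> nat) \<Rightarrow> (nat \<Rightarrow> 'v set) \<Rightarrow>
   ((nat \<Rightarrow> 'v) \<Rightarrow> 't::ab_group_add) \<Rightarrow> 't \<Rightarrow> bool" where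
  "has_Omega_decomposition sV n \<Omega> V tens v \<longleftrightarrow>
     (\<exists>I vb. Omega_decomposition sV n \<Omega> V tens v I vb)"

definition rank_Omega ::
  "(complex \<Rightarrow> 'v::ab_group_add \<Rightarrow> 'v) \<Rightarrow> nat \<Rightarrow> (nat set \<Rightarrow> nat) \<Rightarrow> (nat \<Rightarrow> 'v set) \<Rightarrow>
   ((nat \<Rightarrow> 'v) \<Rightarrow> 't::ab_group_add) \<Rightarrow> 't \<Rightarrow> enat" where
  "rank_Omega sV n \<Omega> V tens v =
     (INF I \<in> {I. \<exists>vb. Omega_decomposition sV n \<Omega> V tens v I vb}. enat (card I))"

end

theory Submission
  imports Defs
begin

text \<open>Write v as a finite sum of elementary tensors x_j(0) \<otimes> ... \<otimes> x_j(n), j < m, and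
  take I = {0..<m} with the diagonal factors: v^[i]_\<beta> = x_j(i) if \<beta> is the constant
  function j, and 0 otherwise.  A summand \<alpha> of the decomposition survives only if every
  restriction of \<alpha> to the facets through a vertex is constant; two neighbouring vertices
  share a facet, so by connectedness \<alpha> is then constant on all facets.  Hence only the m
  diagonal summands remain, and they add up to v.\<close>

lemma wsc_facet_subset: "wsc_facet n \<Omega> F \<Longrightarrow> F \<subseteq> {0..n}"
  unfolding wsc_facet_def wsc_simplex_def by blast

lemma wsc_facet_exists:
  assumes "wsc n \<Omega>" and "i \<in> {0..n}"
  obtains F where "wsc_facet n \<Omega> F" and "i \<in> F"
proof -
  let ?A = "{S. wsc_simplex n \<Omega> S \<and> i \<in> S}"
  have "finite ?A"
    by (rule finite_subset[of _ "Pow {0..n}"]) (auto simp: wsc_simplex_def)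
  moreover have "{i} \<in> ?A"
    using assms unfolding wsc_def wsc_simplex_def by auto
  ultimately obtain F where "F \<in> ?A" and "\<forall>S\<in>?A. F \<subseteq> S \<longrightarrow> F = S"
    using finite_has_maximal[of ?A] by blast
  then have "wsc_facet n \<Omega> F" and "i \<in> F"
    unfolding wsc_facet_def by blast+
  then show thesis by (rule that)
qed

lemma wsc_facet_nonempty:
  assumes "wsc n \<Omega>" and "wsc_facet n \<Omega> F"
  shows "F \<noteq> {}"
proof
  assume "F = {}"
  moreover have "wsc_simplex n \<Omega> {0}"
    using assms(1) unfolding wsc_def wsc_simplex_def by auto
  ultimately show False
    using assms(2) unfolding wsc_facet_def by blast
qed

lemma finite_facets_mult: "finite (facets_mult n \<Omega>)"
proof (rule finite_subset)
  show "facets_mult n \<Omega> \<subseteq> Sigma (Pow {0..n}) (\<lambda>F. {..<\<Omega> F})"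
    unfolding facets_mult_def wsc_facet_def wsc_simplex_def by auto
qed auto

lemma facets_mult_at_subset: "facets_mult_at n \<Omega> i \<subseteq> facets_mult n \<Omega>"
  unfolding facets_mult_at_def by blast

lemma facet_copy_mem_facets_mult_at:
  assumes "wsc_facet n \<Omega> F" and "i \<in> F"
  shows "(F, 0) \<in> facets_mult_at n \<Omega> i"
  using assms unfolding facets_mult_at_def facets_mult_def wsc_facet_def wsc_simplex_def
  by auto

lemma facets_mult_at_nonempty:
  assumes "wsc n \<Omega>" and "i \<in> {0..n}"
  shows "facets_mult_at n \<Omega> i \<noteq> {}"
proof -
  obtain F where "wsc_facet n \<Omega> F" and "i \<in> F"
    using wsc_facet_exists[OF assms] .
  then show ?thesis using facet_copy_mem_facets_mult_at by blast
qed

lemma facets_mult_nonempty: "wsc n \<Omega> \<Longrightarrow> facets_mult n \<Omega> \<noteq> {}"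
  using facets_mult_at_nonempty[of n \<Omega> 0] facets_mult_at_subset by fastforce

lemma facets_mult_covered:
  assumes "wsc n \<Omega>" and "p \<in> facets_mult n \<Omega>"
  obtains i where "i \<in> {0..n}" and "p \<in> facets_mult_at n \<Omega> i"
proof -
  obtain F k where p: "p = (F, k)" and F: "wsc_facet n \<Omega> F"
    using assms(2) unfolding facets_mult_def by auto
  then obtain i where "i \<in> F"
    using wsc_facet_nonempty[OF assms(1)] by blast
  then show thesis
    using that assms(2) p wsc_facet_subset[OF F] unfolding facets_mult_at_def by auto
qed

lemma wsc_connected_locally_constant_imp_constant:
  assumes "wsc n \<Omega>" and "wsc_connected n \<Omega>"
    and local_const: "\<And>i p q. i \<in> {0..n} \<Longrightarrow> p \<in> facets_mult_at n \<Omega> i \<Longrightarrow>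
      q \<in> facets_mult_at n \<Omega> i \<Longrightarrow> \<alpha> p = \<alpha> q"
    and "p \<in> facets_mult n \<Omega>" and "q \<in> facets_mult n \<Omega>"
  shows "\<alpha> p = \<alpha> q"
proof -
  have reach: "\<forall>p\<in>facets_mult_at n \<Omega> a. \<forall>q\<in>facets_mult_at n \<Omega> b. \<alpha> p = \<alpha> q"
    if "(neighbours n \<Omega>)\<^sup>*\<^sup>* a b" and "a \<in> {0..n}" for a b
    using that
  proof (induction rule: rtranclp_induct)
    case base
    then show ?case using local_const by blast
  next
    case (step b d)
    then obtain H where H: "wsc_facet n \<Omega> H" "b \<in> H" "d \<in> H"
      unfolding neighbours_def by blast
    have "d \<in> {0..n}" using H wsc_facet_subset by blast
    show ?case
    proof (intro ballI)
      fix p q assume p: "p \<in> facets_mult_at n \<Omega> a" and q: "q \<in> facets_mult_at n \<Omega> d"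
      have "\<alpha> p = \<alpha> (H, 0)"
        using step.IH[OF step.prems] p facet_copy_mem_facets_mult_at[OF H(1,2)] by blast
      also have "\<dots> = \<alpha> q"
        using local_const[OF \<open>d \<in> {0..n}\<close> facet_copy_mem_facets_mult_at[OF H(1,3)] q] .
      finally show "\<alpha> p = \<alpha> q" .
    qed
  qed
  obtain i where i: "i \<in> {0..n}" "p \<in> facets_mult_at n \<Omega> i"
    using facets_mult_covered[OF assms(1,4)] .
  moreover obtain j where j: "j \<in> {0..n}" "q \<in> facets_mult_at n \<Omega> j"
    using facets_mult_covered[OF assms(1,5)] .
  moreover have "(neighbours n \<Omega>)\<^sup>*\<^sup>* i j"
    using assms(2) i(1) j(1) unfolding wsc_connected_def by blast
  ultimately show ?thesis
    using reach by blast
qed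

lemma wsc_connected_locally_constant_imp_diagonal:
  assumes "wsc n \<Omega>" and "wsc_connected n \<Omega>"
    and \<alpha>: "\<alpha> \<in> PiE (facets_mult n \<Omega>) (\<lambda>_. I)"
    and local_const: "\<forall>i\<in>{0..n}. \<exists>j. \<forall>p\<in>facets_mult_at n \<Omega> i. \<alpha> p = j"
  shows "\<alpha> \<in> (\<lambda>j. restrict (\<lambda>_. j) (facets_mult n \<Omega>)) ` I"
proof -
  obtain p0 where p0: "p0 \<in> facets_mult n \<Omega>"
    using facets_mult_nonempty[OF assms(1)] by blast
  have "\<alpha> q = \<alpha> p0" if "q \<in> facets_mult n \<Omega>" for q
    using wsc_connected_locally_constant_imp_constant[OF assms(1,2) _ that p0, of \<alpha>]
      local_const by metis
  then have "\<alpha> = restrict (\<lambda>_. \<alpha> p0) (facets_mult n \<Omega>)"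
    using \<alpha> by (auto simp: PiE_iff extensional_def fun_eq_iff)
  moreover have "\<alpha> p0 \<in> I" using \<alpha> p0 by blast
  ultimately show ?thesis by blast
qed

lemma multilinear_on_scale:
  assumes "multilinear_on sV sT n V tens" and "module sV" and "module sT"
    and "x \<in> PiE {0..n} V" and "k \<in> {0..n}"
  shows "tens (x(k := sV c (x k))) = sT c (tens x)"
proof -
  have "x k \<in> V k" using assms(4,5) by blast
  then have "tens (x(k := sV c (x k) + sV 0 (x k))) =
      sT c (tens (x(k := x k))) + sT 0 (tens (x(k := x k)))"
    using assms(1,4,5) unfolding multilinear_on_def by blast
  then show ?thesis
    using module.scale_zero_left[OF assms(2)] module.scale_zero_left[OF assms(3)] by simp
qed

lemma multilinear_on_zero:
  assumes "multilinear_on sV sT n V tens" and "module sV" and "module sT"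
    and "x \<in> PiE {0..n} V" and "k \<in> {0..n}" and "x k = 0"
  shows "tens x = 0"
  using multilinear_on_scale[OF assms(1-5), of 0] assms(6)
    module.scale_zero_left[OF assms(2)] module.scale_zero_left[OF assms(3)]
  by (simp add: fun_upd_idem)

lemma tensor_product_sum_elementary:
  assumes "is_tensor_product sV sT n V tens"
  obtains m :: nat and x where "\<forall>j<m. x j \<in> PiE {0..n} V" and "v = (\<Sum>j<m. tens (x j))"
proof -
  have mV: "module sV" and mT: "module sT" and sub: "\<forall>i\<in>{0..n}. module.subspace sV (V i)"
    and ml: "multilinear_on sV sT n V tens" and "module.span sT (tens ` PiE {0..n} V) = UNIV"
    using assms unfolding is_tensor_product_def module_iff_vector_space by auto
  then have "v \<in> module.span sT (tens ` PiE {0..n} V)" by simp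
  then have "\<exists>m x. (\<forall>j<m. x j \<in> PiE {0..n} V) \<and> v = (\<Sum>j<m::nat. tens (x j))"
  proof (induction rule: module.span_induct_alt[OF mT, consumes 1, case_names base step])
    case base
    show ?case by (rule exI[of _ 0]) simp
  next
    case (step c t w)
    then obtain y m x where y: "y \<in> PiE {0..n} V" and t: "t = tens y"
      and x: "\<forall>j<m. x j \<in> PiE {0..n} V" and w: "w = (\<Sum>j<m::nat. tens (x j))"
      by blast
    let ?y = "y(0 := sV c (y 0))"
    have "sV c (y 0) \<in> V 0"
      using y sub module.subspace_scale[OF mV] by (auto simp: PiE_iff)
    then have "?y \<in> PiE {0..n} V"
      using PiE_fun_upd[OF _ y, of "sV c (y 0)" 0] by (simp add: insert_absorb)
    moreover have "sT c t = tens ?y"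
      using multilinear_on_scale[OF ml mV mT y] t by simp
    ultimately show ?case
      using x w by (intro exI[of _ "Suc m"] exI[of _ "x(m := ?y)"]) (auto simp: add.commute)
  qed
  then show thesis using that by blast
qed

definition diagonal_factor ::
  "nat \<Rightarrow> (nat set \<Rightarrow> nat) \<Rightarrow> nat \<Rightarrow> (nat \<Rightarrow> nat \<Rightarrow> 'v::zero) \<Rightarrow>
   nat \<Rightarrow> ((nat set \<times> nat) \<Rightarrow> nat) \<Rightarrow> 'v" where
  "diagonal_factor n \<Omega> m x i \<beta> =
     (if \<exists>j<m. \<beta> = restrict (\<lambda>_. j) (facets_mult_at n \<Omega> i)
      then x (SOME j. j < m \<and> \<beta> = restrict (\<lambda>_. j) (facets_mult_at n \<Omega> i)) i else 0)"

lemma diagonal_factor_mem: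
  assumes "module sV" and "module.subspace sV (V i)" and "\<forall>j<m. x j \<in> PiE {0..n} V"
    and "i \<in> {0..n}"
  shows "diagonal_factor n \<Omega> m x i \<beta> \<in> V i"
  using assms someI_ex[of "\<lambda>j. j < m \<and> \<beta> = restrict (\<lambda>_. j) (facets_mult_at n \<Omega> i)"]
    module.subspace_0[OF assms(1)]
  unfolding diagonal_factor_def by (auto simp: PiE_iff)

lemma diagonal_factor_const:
  assumes "wsc n \<Omega>" and "i \<in> {0..n}" and "j < m"
  shows "diagonal_factor n \<Omega> m x i (restrict (\<lambda>_. j) (facets_mult_at n \<Omega> i)) = x j i"
proof -
  obtain p where p: "p \<in> facets_mult_at n \<Omega> i"
    using facets_mult_at_nonempty[OF assms(1,2)] by blast
  have "j' = j" if "restrict (\<lambda>_. j) (facets_mult_at n \<Omega> i) =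
      restrict (\<lambda>_. j') (facets_mult_at n \<Omega> i)" for j'
    using fun_cong[OF that, of p] p by simp
  then have "(SOME j'. j' < m \<and> restrict (\<lambda>_. j) (facets_mult_at n \<Omega> i) =
      restrict (\<lambda>_. j') (facets_mult_at n \<Omega> i)) = j"
    using assms(3) by (intro some_equality) auto
  then show ?thesis
    unfolding diagonal_factor_def using assms(3) by auto
qed

lemma diagonal_factor_nonconst:
  assumes "\<not> (\<exists>j. \<forall>p\<in>facets_mult_at n \<Omega> i. \<beta> p = j)"
  shows "diagonal_factor n \<Omega> m x i \<beta> = 0"
  using assms unfolding diagonal_factor_def by auto

lemma Omega_decomposition_diagonal:
  fixes sV :: "complex \<Rightarrow> 'v::ab_group_add \<Rightarrow> 'v"
    and sT :: "complex \<Rightarrow> 't::ab_group_add \<Rightarrow> 't"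
  assumes wsc: "wsc n \<Omega>" and con: "wsc_connected n \<Omega>"
    and ml: "multilinear_on sV sT n V tens" and mV: "module sV" and mT: "module sT"
    and sub: "\<forall>i\<in>{0..n}. module.subspace sV (V i)"
    and x: "\<forall>j<m. x j \<in> PiE {0..n} V"
  shows "Omega_decomposition sV n \<Omega> V tens (\<Sum>j<m. tens (x j)) {..<m}
           (diagonal_factor n \<Omega> m x)"
proof -
  let ?Ft = "facets_mult n \<Omega>" and ?Fi = "facets_mult_at n \<Omega>"
  let ?const = "\<lambda>j. restrict (\<lambda>_. j) ?Ft"
  define summand where "summand \<alpha> =
    tens (restrict (\<lambda>i. diagonal_factor n \<Omega> m x i (restrict \<alpha> (?Fi i))) {0..n})" for \<alpha>
  have factors_mem: "restrict (\<lambda>i. diagonal_factor n \<Omega> m x i (\<beta> i)) {0..n} \<in> PiE {0..n} V"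
    for \<beta>
    using diagonal_factor_mem[OF mV _ x] sub by auto
  have summand_const: "summand (?const j) = tens (x j)" if "j < m" for j
  proof -
    have "restrict (\<lambda>i. diagonal_factor n \<Omega> m x i (restrict (?const j) (?Fi i))) {0..n}
        = x j"
      using diagonal_factor_const[OF wsc _ that] x that
      by (auto simp: Int_absorb1[OF facets_mult_at_subset] PiE_iff extensional_def fun_eq_iff)
    then show ?thesis unfolding summand_def by simp
  qed
  have summand_nonconst: "summand \<alpha> = 0"
    if \<alpha>: "\<alpha> \<in> PiE ?Ft (\<lambda>_. {..<m}) - ?const ` {..<m}" for \<alpha>
  proof -
    obtain i where i: "i \<in> {0..n}" and "\<not> (\<exists>j. \<forall>p\<in>?Fi i. \<alpha> p = j)"
      using wsc_connected_locally_constant_imp_diagonal[OF wsc con] \<alpha> by blast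
    then have "diagonal_factor n \<Omega> m x i (restrict \<alpha> (?Fi i)) = 0"
      by (intro diagonal_factor_nonconst) simp
    then show ?thesis
      unfolding summand_def using multilinear_on_zero[OF ml mV mT factors_mem i] i by simp
  qed
  have "inj_on ?const {..<m}"
  proof
    fix a b assume "?const a = ?const b"
    moreover obtain p where "p \<in> ?Ft"
      using facets_mult_nonempty[OF wsc] by blast
    ultimately show "a = b" by (metis restrict_apply')
  qed
  then have "(\<Sum>j<m. tens (x j)) = (\<Sum>\<alpha> \<in> ?const ` {..<m}. summand \<alpha>)"
    by (simp add: sum.reindex summand_const)
  also have "\<dots> = (\<Sum>\<alpha> \<in> PiE ?Ft (\<lambda>_. {..<m}). summand \<alpha>)"
    by (rule sum.mono_neutral_left)
      (use summand_nonconst in \<open>auto intro: finite_PiE finite_facets_mult\<close>)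
  finally show ?thesis
    unfolding Omega_decomposition_def summand_def using diagonal_factor_mem[OF mV _ x] sub
    by auto
qed

lemma rank_Omega_le_card:
  assumes "Omega_decomposition sV n \<Omega> V tens v I vb"
  shows "rank_Omega sV n \<Omega> V tens v \<le> enat (card I)"
  unfolding rank_Omega_def using assms by (auto intro: INF_lower)

theorem theorem3p4:
  fixes n :: nat and \<Omega> :: "nat set \<Rightarrow> nat"
    and sV :: "complex \<Rightarrow> 'v::ab_group_add \<Rightarrow> 'v"
    and sT :: "complex \<Rightarrow> 't::ab_group_add \<Rightarrow> 't"
    and V :: "nat \<Rightarrow> 'v set" and tens :: "(nat \<Rightarrow> 'v) \<Rightarrow> 't"
  assumes "wsc n \<Omega>" and "wsc_connected n \<Omega>"
    and "is_tensor_product sV sT n V tens"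
  shows "\<forall>v. rank_Omega sV n \<Omega> V tens v < \<infinity> \<and> has_Omega_decomposition sV n \<Omega> V tens v"
proof
  fix v
  have "module sV" and "module sT" and "\<forall>i\<in>{0..n}. module.subspace sV (V i)"
    and "multilinear_on sV sT n V tens"
    using assms(3) unfolding is_tensor_product_def module_iff_vector_space by auto
  moreover obtain m :: nat and x where "\<forall>j<m. x j \<in> PiE {0..n} V"
    and v: "v = (\<Sum>j<m. tens (x j))"
    using tensor_product_sum_elementary[OF assms(3)] .
  ultimately have dec: "Omega_decomposition sV n \<Omega> V tens v {..<m} (diagonal_factor n \<Omega> m x)"
    unfolding v using Omega_decomposition_diagonal[OF assms(1,2)] by blast
  then have "rank_Omega sV n \<Omega> V tens v < \<infinity>"
    using rank_Omega_le_card le_less_trans enat_ord_simps(4) by blast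
  with dec show "rank_Omega sV n \<Omega> V tens v < \<infinity> \<and> has_Omega_decomposition sV n \<Omega> V tens v"
    unfolding has_Omega_decomposition_def by blast
qed

end
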